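(* Let $H$ be a connected pointed block graph, let $Q$ be a near-leaf block of $H$, and let $v$ be the anchor of $Q$ if it exists and otherwise any cut-vertex of $Q$. Let $x\neq v$ be a cut-vertex of $Q$ and let $L$ be a leaf block of $H$ that is a neighbour of $Q$ and contains $x$. Then every maximal co-interval subgraph $K$ of $H$ with $E(L)\subseteq E(K)$ satisfies $E(K)=E(Q_{x,y})$ for some $y\in V(Q)$.
   Context: All graphs are finite and simple. A block is a maximal connected subgraph with no cut-vertex of its own; a block graph is one whose blocks are all complete. A cut-vertex is a vertex whose removal increases the number of connected components. A block is a leaf block if it contains exactly one cut-vertex, an internal block if it contains at least two, and an edge block if it has exactly two vertices; two distinct blocks are neighbours if they share a vertex. A graph is pointed if all its leaf blocks are edge blocks. An internal block $Q$ is a near-leaf block if either all neighbours of $Q$ are leaf blocks, or all internal block neighbours of $Q$ share with $Q$ one and the same cut-vertex, called the anchor of $Q$. For a clique $Q$ and $x,y\in V(Q)$, the big ant is $Q_{x,y}=\big(V(Q)\cup N_H(x)\cup N_H(y),\ E(Q)\cup\delta_H(x)\cup\delta_H(y)\big)$. A graph is co-interval if its vertices can be assigned closed real intervals such that two vertices are adjacent iff their intervals are disjoint. A co-interval subgraph $K$ of $H$ is maximal if no co-interval subgraph $K'$ of $H$ has $E(K)\subsetneq E(K')$. *)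

theory Defs
  imports Complex_Main
begin

type_synonym 'a graph = "'a set \<times> 'a set set"

abbreviation verts :: "'a graph \<Rightarrow> 'a set" where "verts G \<equiv> fst G"
abbreviation edges :: "'a graph \<Rightarrow> 'a set set" where "edges G \<equiv> snd G"

definition wf_graph :: "'a graph \<Rightarrow> bool" where
  "wf_graph G \<longleftrightarrow> finite (verts G) \<and> (\<forall>e\<in>edges G. e \<subseteq> verts G \<and> card e = 2)"

definition subgraph :: "'a graph \<Rightarrow> 'a graph \<Rightarrow> bool" where
  "subgraph K H \<longleftrightarrow> wf_graph K \<and> verts K \<subseteq> verts H \<and> edges K \<subseteq> edges H"

definition adj :: "'a graph \<Rightarrow> ('a \<times> 'a) set" where
  "adj G = {(u, w). {u, w} \<in> edges G}"

definition reach :: "'a graph \<Rightarrow> ('a \<times> 'a) set" where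
  "reach G = {(u, w). u \<in> verts G \<and> w \<in> verts G \<and> (u, w) \<in> (adj G)\<^sup>*}"

definition connected_graph :: "'a graph \<Rightarrow> bool" where
  "connected_graph G \<longleftrightarrow> verts G \<noteq> {} \<and> (\<forall>u\<in>verts G. \<forall>w\<in>verts G. (u, w) \<in> (adj G)\<^sup>*)"

definition ncomp :: "'a graph \<Rightarrow> nat" where
  "ncomp G = card (verts G // reach G)"

definition del_vertex :: "'a graph \<Rightarrow> 'a \<Rightarrow> 'a graph" where
  "del_vertex G v = (verts G - {v}, {e \<in> edges G. v \<notin> e})"

definition cut_vertex :: "'a graph \<Rightarrow> 'a \<Rightarrow> bool" where
  "cut_vertex G v \<longleftrightarrow> v \<in> verts G \<and> ncomp (del_vertex G v) > ncomp G"

definition biconn_piece :: "'a graph \<Rightarrow> bool" where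
  "biconn_piece B \<longleftrightarrow> connected_graph B \<and> (\<forall>v. \<not> cut_vertex B v)"

definition is_block :: "'a graph \<Rightarrow> 'a graph \<Rightarrow> bool" where
  "is_block H B \<longleftrightarrow> subgraph B H \<and> biconn_piece B \<and>
     (\<forall>B'. subgraph B' H \<and> biconn_piece B' \<and> verts B \<subseteq> verts B' \<and> edges B \<subseteq> edges B' \<longrightarrow> B' = B)"

definition complete :: "'a graph \<Rightarrow> bool" where
  "complete G \<longleftrightarrow> edges G = {e. e \<subseteq> verts G \<and> card e = 2}"

definition block_graph :: "'a graph \<Rightarrow> bool" where
  "block_graph H \<longleftrightarrow> (\<forall>B. is_block H B \<longrightarrow> complete B)"

definition leaf_block :: "'a graph \<Rightarrow> 'a graph \<Rightarrow> bool" where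
  "leaf_block H B \<longleftrightarrow> is_block H B \<and> card {c \<in> verts B. cut_vertex H c} = 1"

definition internal_block :: "'a graph \<Rightarrow> 'a graph \<Rightarrow> bool" where
  "internal_block H B \<longleftrightarrow> is_block H B \<and> card {c \<in> verts B. cut_vertex H c} \<ge> 2"

definition edge_block :: "'a graph \<Rightarrow> 'a graph \<Rightarrow> bool" where
  "edge_block H B \<longleftrightarrow> is_block H B \<and> card (verts B) = 2"

definition block_nbr :: "'a graph \<Rightarrow> 'a graph \<Rightarrow> 'a graph \<Rightarrow> bool" where
  "block_nbr H B1 B2 \<longleftrightarrow> is_block H B1 \<and> is_block H B2 \<and> B1 \<noteq> B2 \<and> verts B1 \<inter> verts B2 \<noteq> {}"

definition pointed :: "'a graph \<Rightarrow> bool" where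
  "pointed H \<longleftrightarrow> (\<forall>B. leaf_block H B \<longrightarrow> edge_block H B)"

definition is_anchor :: "'a graph \<Rightarrow> 'a graph \<Rightarrow> 'a \<Rightarrow> bool" where
  "is_anchor H Q c \<longleftrightarrow> internal_block H Q \<and> c \<in> verts Q \<and> cut_vertex H c \<and>
     (\<exists>B. block_nbr H Q B \<and> internal_block H B) \<and>
     (\<forall>B. block_nbr H Q B \<and> internal_block H B \<longrightarrow> c \<in> verts B)"

definition near_leaf_block :: "'a graph \<Rightarrow> 'a graph \<Rightarrow> bool" where
  "near_leaf_block H Q \<longleftrightarrow> internal_block H Q \<and>
     ((\<forall>B. block_nbr H Q B \<longrightarrow> leaf_block H B) \<or> (\<exists>c. is_anchor H Q c))"

definition delta :: "'a graph \<Rightarrow> 'a \<Rightarrow> 'a set set" where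
  "delta H x = {e \<in> edges H. x \<in> e}"

definition nbhd :: "'a graph \<Rightarrow> 'a \<Rightarrow> 'a set" where
  "nbhd H x = {w. {x, w} \<in> edges H}"

definition big_ant :: "'a graph \<Rightarrow> 'a graph \<Rightarrow> 'a \<Rightarrow> 'a \<Rightarrow> 'a graph" where
  "big_ant H Q x y = (verts Q \<union> nbhd H x \<union> nbhd H y, edges Q \<union> delta H x \<union> delta H y)"

text \<open>Co-interval: closed intervals [fst (f v), snd (f v)], adjacent iff disjoint.\<close>
definition co_interval :: "'a graph \<Rightarrow> bool" where
  "co_interval G \<longleftrightarrow> (\<exists>f :: 'a \<Rightarrow> real \<times> real.
     (\<forall>v\<in>verts G. fst (f v) \<le> snd (f v)) \<and>
     (\<forall>u\<in>verts G. \<forall>w\<in>verts G. u \<noteq> w \<longrightarrow>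
        ({u, w} \<in> edges G \<longleftrightarrow> snd (f u) < fst (f w) \<or> snd (f w) < fst (f u))))"

definition max_co_interval_subgraph :: "'a graph \<Rightarrow> 'a graph \<Rightarrow> bool" where
  "max_co_interval_subgraph H K \<longleftrightarrow> subgraph K H \<and> co_interval K \<and>
     \<not> (\<exists>K'. subgraph K' H \<and> co_interval K' \<and> edges K \<subset> edges K')"

end

theory Submission
  imports Defs "HOL-Library.Product_Order"
begin

text \<open>Let \<open>a\<close> be the pendant neighbour of \<open>x\<close> in the edge block \<open>L\<close>. Since \<open>Q\<close> is a
  near-leaf block and \<open>x\<close> is not its anchor, every neighbour of \<open>x\<close> outside \<open>Q\<close> is
  pendant, and every common neighbour of two vertices of \<open>Q\<close> lies in \<open>Q\<close>.
  A co-interval graph has no induced \<open>2K\<^sub>2\<close>, net or \<open>C\<^sub>5\<close>. As \<open>xa \<in> E(K)\<close>, every edge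
  of \<open>K\<close> avoiding \<open>x\<close> has an endpoint \<open>p \<in> V(Q)\<close> with \<open>xp \<in> E(K)\<close>, and at most one
  such \<open>p \<noteq> x\<close> has a \<open>K\<close>-neighbour outside \<open>Q\<close>. Calling it \<open>y\<close> (or \<open>y = x\<close> if there is
  none) gives \<open>E(K) \<subseteq> E(Q\<^sub>x\<^sub>y)\<close>; since the big ant \<open>Q\<^sub>x\<^sub>y\<close> is itself co-interval, maximality
  of \<open>K\<close> forces equality.\<close>

section \<open>Connected vertex sets\<close>

definition induced :: "'a graph \<Rightarrow> 'a set \<Rightarrow> 'a graph" where
  "induced H S = (S, {e \<in> edges H. e \<subseteq> S})"

text \<open>The empty set counts as connected, so that deleting a vertex from a singleton
  needs no special case.\<close>

definition connected_on :: "'a graph \<Rightarrow> 'a set \<Rightarrow> bool" where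
  "connected_on H S \<longleftrightarrow> (\<forall>u\<in>S. \<forall>w\<in>S. (u, w) \<in> (adj (induced H S))\<^sup>*)"

lemma sym_adj: "sym (adj G)"
  by (auto simp: sym_def adj_def insert_commute)

lemma adj_rtrancl_sym: "(u, w) \<in> (adj G)\<^sup>* \<Longrightarrow> (w, u) \<in> (adj G)\<^sup>*"
  using sym_rtrancl[OF sym_adj] by (rule symD)

lemma adj_induced_iff: "(u, w) \<in> adj (induced H S) \<longleftrightarrow> {u, w} \<in> edges H \<and> u \<in> S \<and> w \<in> S"
  by (auto simp: adj_def induced_def)

lemma adj_induced_rtrancl_closed: "(u, w) \<in> (adj (induced H S))\<^sup>* \<Longrightarrow> u \<in> S \<Longrightarrow> w \<in> S"
  by (induction rule: rtrancl_induct) (auto simp: adj_induced_iff)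

lemma adj_induced_rtrancl_mono:
  assumes "(u, w) \<in> (adj (induced H T))\<^sup>*" and "T \<subseteq> S"
  shows "(u, w) \<in> (adj (induced H S))\<^sup>*"
proof -
  have "adj (induced H T) \<subseteq> adj (induced H S)"
    using \<open>T \<subseteq> S\<close> by (auto simp: adj_induced_iff)
  then show ?thesis using assms(1) rtrancl_mono by blast
qed

lemma connected_onI_root:
  assumes "r \<in> S" and "\<And>u. u \<in> S \<Longrightarrow> (u, r) \<in> (adj (induced H S))\<^sup>*"
  shows "connected_on H S"
  unfolding connected_on_def using assms by (meson adj_rtrancl_sym rtrancl_trans)

lemma connected_onI_star:
  assumes "s \<in> S" and "\<And>u. u \<in> S \<Longrightarrow> u = s \<or> {s, u} \<in> edges H"
  shows "connected_on H S"
proof (rule connected_onI_root[OF \<open>s \<in> S\<close>])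
  fix u assume "u \<in> S"
  then show "(u, s) \<in> (adj (induced H S))\<^sup>*"
    using assms by (metis adj_induced_iff insert_commute r_into_rtrancl rtrancl.rtrancl_refl)
qed

lemma connected_on_clique:
  assumes "\<And>u w. u \<in> S \<Longrightarrow> w \<in> S \<Longrightarrow> u \<noteq> w \<Longrightarrow> {u, w} \<in> edges H"
  shows "connected_on H S"
proof (cases "S = {}")
  case False
  then obtain s where "s \<in> S" by auto
  then show ?thesis using assms by (blast intro: connected_onI_star)
qed (simp add: connected_on_def)

lemma ncomp_induced_connected_on:
  assumes "S \<noteq> {}" and "connected_on H S"
  shows "ncomp (induced H S) = 1"
proof -
  have "reach (induced H S) `` {u} = S" if "u \<in> S" for u
    using assms(2) that by (auto simp: connected_on_def reach_def induced_def)
  then have "S // reach (induced H S) = {S}"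
    using \<open>S \<noteq> {}\<close> unfolding quotient_def by blast
  then show ?thesis by (simp add: ncomp_def induced_def)
qed

lemma connected_on_if_ncomp_le_1:
  assumes "finite S" and "ncomp (induced H S) \<le> 1"
  shows "connected_on H S"
  unfolding connected_on_def
proof (intro ballI)
  let ?r = "reach (induced H S)"
  fix u w assume u: "u \<in> S" and w: "w \<in> S"
  have fin: "finite (S // ?r)"
    by (rule finite_quotient[OF assms(1)]) (auto simp: reach_def induced_def)
  have "\<forall>A\<in>S // ?r. \<forall>B\<in>S // ?r. A = B"
    using assms(2) card_le_Suc0_iff_eq[OF fin] by (simp add: ncomp_def induced_def)
  then have "?r `` {u} = ?r `` {w}" using u w by (simp add: quotientI)
  moreover have "w \<in> ?r `` {w}" using w by (simp add: reach_def induced_def)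
  ultimately show "(u, w) \<in> (adj (induced H S))\<^sup>*" by (auto simp: reach_def)
qed

lemma del_vertex_induced: "del_vertex (induced H S) c = induced H (S - {c})"
  by (auto simp: del_vertex_def induced_def)

lemma induced_verts: "wf_graph H \<Longrightarrow> induced H (verts H) = H"
  by (cases H) (auto simp: wf_graph_def induced_def)

lemma subgraph_induced: "wf_graph H \<Longrightarrow> S \<subseteq> verts H \<Longrightarrow> subgraph (induced H S) H"
  by (auto simp: subgraph_def wf_graph_def induced_def intro: finite_subset)

lemma biconn_piece_inducedI:
  assumes "S \<noteq> {}" and "connected_on H S" and "\<And>c. c \<in> S \<Longrightarrow> connected_on H (S - {c})"
  shows "biconn_piece (induced H S)"
  unfolding biconn_piece_def
proof
  show "connected_graph (induced H S)"
    using assms(1,2) by (simp add: connected_graph_def connected_on_def induced_def)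
  show "\<forall>c. \<not> cut_vertex (induced H S) c"
  proof (intro allI notI)
    fix c assume cut: "cut_vertex (induced H S) c"
    then have "c \<in> S" by (simp add: cut_vertex_def induced_def)
    have "ncomp (induced H (S - {c})) \<le> 1"
    proof (cases "S - {c} = {}")
      case True then show ?thesis by (simp add: ncomp_def induced_def True)
    next
      case False then show ?thesis
        using assms(3)[OF \<open>c \<in> S\<close>] ncomp_induced_connected_on by (metis order_refl)
    qed
    then show False
      using cut ncomp_induced_connected_on[OF assms(1,2)] by (simp add: cut_vertex_def del_vertex_induced)
  qed
qed

section \<open>Blocks of block graphs\<close>

lemma block_graph_complete: "block_graph H \<Longrightarrow> is_block H B \<Longrightarrow> complete B"
  unfolding block_graph_def by blast

lemma complete_block_edge:
  assumes "is_block H B" and "complete B" and "u \<in> verts B" and "w \<in> verts B" and "u \<noteq> w"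
  shows "{u, w} \<in> edges H"
  using assms by (auto simp: complete_def is_block_def subgraph_def)

lemma edges_block_subset_induced:
  "is_block H B \<Longrightarrow> verts B \<subseteq> S \<Longrightarrow> edges B \<subseteq> edges (induced H S)"
  by (auto simp: is_block_def subgraph_def wf_graph_def induced_def)

lemma complete_blocks_eq:
  assumes wf: "wf_graph H" and B1: "is_block H B1" "complete B1" and B2: "is_block H B2" "complete B2"
    and "u \<noteq> w" and u: "u \<in> verts B1" "u \<in> verts B2" and w: "w \<in> verts B1" "w \<in> verts B2"
  shows "B1 = B2"
proof -
  let ?S = "verts B1 \<union> verts B2"
  have star: "connected_on H T" if "s \<in> verts B1" "s \<in> verts B2" "T \<subseteq> ?S" "s \<in> T" for s T
    using that complete_block_edge[OF B1] complete_block_edge[OF B2]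
    by (intro connected_onI_star[OF \<open>s \<in> T\<close>]) blast
  have "biconn_piece (induced H ?S)"
  proof (rule biconn_piece_inducedI)
    show "?S \<noteq> {}" "connected_on H ?S" using u star[OF u] by auto
    fix c
    show "connected_on H (?S - {c})"
      using star[OF u, of "?S - {c}"] star[OF w, of "?S - {c}"] u w \<open>u \<noteq> w\<close> by blast
  qed
  moreover have "subgraph (induced H ?S) H"
    using B1 B2 wf by (intro subgraph_induced) (auto simp: is_block_def subgraph_def)
  ultimately have "induced H ?S = B1" and "induced H ?S = B2"
    using B1(1) B2(1) edges_block_subset_induced[OF B1(1), of ?S] edges_block_subset_induced[OF B2(1), of ?S]
    unfolding is_block_def by (auto simp: induced_def)
  then show ?thesis by simp
qed

lemma finite_subgraphs:
  assumes "wf_graph H"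
  shows "finite {B. subgraph B H}"
proof -
  have "edges H \<subseteq> Pow (verts H)" using assms by (auto simp: wf_graph_def)
  then have "finite (Pow (verts H) \<times> Pow (edges H))"
    using assms by (simp add: wf_graph_def finite_subset)
  moreover have "{B. subgraph B H} \<subseteq> Pow (verts H) \<times> Pow (edges H)"
    by (auto simp: subgraph_def)
  ultimately show ?thesis by (rule finite_subset[rotated])
qed

text \<open>Graphs are ordered componentwise by inclusion, so blocks are the maximal
  elements among the subgraphs without cut-vertices.\<close>

lemma block_containing_biconn_piece:
  assumes wf: "wf_graph H" and "subgraph B0 H" and "biconn_piece B0"
  shows "\<exists>B. is_block H B \<and> verts B0 \<subseteq> verts B"
proof -
  let ?A = "{B. subgraph B H \<and> biconn_piece B}"
  have "finite ?A" using finite_subgraphs[OF wf] by (rule finite_subset[rotated]) auto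
  then obtain B where "B \<in> ?A" "B0 \<le> B" and max: "\<forall>B'\<in>?A. B \<le> B' \<longrightarrow> B = B'"
    using finite_has_maximal2[of ?A B0] assms by blast
  moreover have "is_block H B" using \<open>B \<in> ?A\<close> max by (auto simp: is_block_def less_eq_prod_def)
  ultimately show ?thesis unfolding less_eq_prod_def by blast
qed

lemma block_containing:
  assumes wf: "wf_graph H" and "S \<subseteq> verts H" and "S \<noteq> {}" and "connected_on H S"
    and "\<And>c. c \<in> S \<Longrightarrow> connected_on H (S - {c})"
  shows "\<exists>B. is_block H B \<and> S \<subseteq> verts B"
  using block_containing_biconn_piece[OF wf subgraph_induced[OF wf] biconn_piece_inducedI] assms
  by (auto simp: induced_def)

lemma block_containing_clique:
  assumes wf: "wf_graph H" and "S \<subseteq> verts H" and "S \<noteq> {}"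
    and clique: "\<And>u w. u \<in> S \<Longrightarrow> w \<in> S \<Longrightarrow> u \<noteq> w \<Longrightarrow> {u, w} \<in> edges H"
  shows "\<exists>B. is_block H B \<and> S \<subseteq> verts B"
  using assms by (intro block_containing connected_on_clique) auto

lemma connected_on_remove_component:
  fixes u :: 'a
  assumes conn: "connected_on H T" and "c \<in> T" and "u \<in> T - {c}"
  defines "C \<equiv> {w. (u, w) \<in> (adj (induced H (T - {c})))\<^sup>*}"
  shows "connected_on H (T - C)"
proof (rule connected_onI_root)
  show c: "c \<in> T - C"
    using \<open>c \<in> T\<close> \<open>u \<in> T - {c}\<close> adj_induced_rtrancl_closed[of u c H "T - {c}"]
    by (auto simp: C_def)
  fix w assume w: "w \<in> T - C"
  have "(w, c) \<in> (adj (induced H T))\<^sup>*" using w conn \<open>c \<in> T\<close> by (auto simp: connected_on_def)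
  then show "(w, c) \<in> (adj (induced H (T - C)))\<^sup>*" using w
  proof (induction rule: converse_rtrancl_induct)
    case base then show ?case by simp
  next
    case (step w y)
    have wy: "{w, y} \<in> edges H" "y \<in> T" using step.hyps(1) by (auto simp: adj_induced_iff)
    show ?case
    proof (cases "y \<in> C \<and> w \<noteq> c")
      case True
      then have "(y, w) \<in> adj (induced H (T - {c}))"
        using wy step.prems c adj_induced_rtrancl_closed[of u y H "T - {c}"]
        by (auto simp: C_def adj_induced_iff insert_commute elim: converse_rtranclE)
      then have "w \<in> C" using True by (auto simp: C_def)
      then show ?thesis using step.prems by simp
    next
      case False
      then show ?thesis
        using step wy by (metis DiffI adj_induced_iff converse_rtrancl_into_rtrancl rtrancl.rtrancl_refl)
    qed
  qed
qed

lemma minimal_connected_on_reaches_terminal: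
  assumes conn: "connected_on H T" and "z \<in> T" and "b \<in> T"
    and minimal: "\<And>T'. T' \<subseteq> T \<Longrightarrow> z \<in> T' \<Longrightarrow> b \<in> T' \<Longrightarrow> connected_on H T' \<Longrightarrow> T' = T"
    and "c \<in> T" and "u \<in> T - {c}"
  shows "(u, z) \<in> (adj (induced H (T - {c})))\<^sup>* \<or> (u, b) \<in> (adj (induced H (T - {c})))\<^sup>*"
proof (rule ccontr)
  let ?C = "{w. (u, w) \<in> (adj (induced H (T - {c})))\<^sup>*}"
  assume "\<not> ?thesis"
  then have "T - ?C = T"
    using connected_on_remove_component[OF conn \<open>c \<in> T\<close> \<open>u \<in> T - {c}\<close>] \<open>z \<in> T\<close> \<open>b \<in> T\<close>
    by (intro minimal) auto
  then show False using \<open>u \<in> T - {c}\<close> by blast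
qed

lemma connected_on_insert:
  assumes "\<And>u. u \<in> T \<Longrightarrow> \<exists>t\<in>T. (u, t) \<in> (adj (induced H T))\<^sup>* \<and> {t, p} \<in> edges H"
  shows "connected_on H (insert p T)"
proof (rule connected_onI_root)
  show "p \<in> insert p T" by simp
  fix u assume "u \<in> insert p T"
  show "(u, p) \<in> (adj (induced H (insert p T)))\<^sup>*"
  proof (cases "u = p")
    case False
    then obtain t where "t \<in> T" "(u, t) \<in> (adj (induced H T))\<^sup>*" "{t, p} \<in> edges H"
      using assms \<open>u \<in> insert p T\<close> by auto
    then have "(u, t) \<in> (adj (induced H (insert p T)))\<^sup>*" "(t, p) \<in> adj (induced H (insert p T))"
      using adj_induced_rtrancl_mono[of u t H T "insert p T"] by (auto simp: adj_induced_iff)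
    then show ?thesis by (rule rtrancl_into_rtrancl)
  qed simp
qed

lemma connected_on_del_non_cut_vertex:
  assumes wf: "wf_graph H" and "connected_graph H" and "p \<in> verts H" and "\<not> cut_vertex H p"
  shows "connected_on H (verts H - {p})"
proof -
  have "connected_on H (verts H)"
    using \<open>connected_graph H\<close> by (simp add: connected_on_def connected_graph_def induced_verts[OF wf])
  then have "ncomp H = 1"
    using ncomp_induced_connected_on[of "verts H" H] \<open>p \<in> verts H\<close> by (auto simp: induced_verts[OF wf])
  then have "ncomp (induced H (verts H - {p})) \<le> 1"
    using assms(3,4) by (simp add: cut_vertex_def del_vertex_induced[symmetric] induced_verts[OF wf])
  then show ?thesis using wf by (intro connected_on_if_ncomp_le_1) (auto simp: wf_graph_def)
qed

text \<open>A minimal connected set \<open>T\<close> joining \<open>z\<close> to \<open>b\<close> in \<open>H - p\<close> becomes, together with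
  the common neighbour \<open>p\<close> of \<open>z\<close> and \<open>b\<close>, a vertex set without cut-vertex, hence
  lies inside the block through \<open>p\<close> and \<open>z\<close>.\<close>

lemma non_cut_vertex_nbr_in_block:
  assumes wf: "wf_graph H" and cH: "connected_graph H" and bg: "block_graph H"
    and B: "is_block H B" and p: "p \<in> verts B" and z: "z \<in> verts B" "z \<noteq> p"
    and nc: "\<not> cut_vertex H p" and pb: "{p, b} \<in> edges H"
  shows "b \<in> verts B"
proof -
  let ?V = "verts H - {p}"
  have cB: "complete B" using block_graph_complete[OF bg B] .
  have pV: "p \<in> verts H" and zV: "z \<in> verts H" using B p z by (auto simp: is_block_def subgraph_def)
  have bV: "b \<in> verts H" and "b \<noteq> p" using wf pb by (auto simp: wf_graph_def)
  let ?A = "{T. T \<subseteq> ?V \<and> z \<in> T \<and> b \<in> T \<and> connected_on H T}"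
  have "finite (Pow ?V)" using wf by (simp add: wf_graph_def)
  then have "finite ?A" by (rule finite_subset[rotated]) blast
  moreover have "?V \<in> ?A"
    using connected_on_del_non_cut_vertex[OF wf cH pV nc] zV z bV \<open>b \<noteq> p\<close> by auto
  ultimately obtain T where "T \<in> ?A" and min: "\<forall>T'\<in>?A. T' \<le> T \<longrightarrow> T = T'"
    using finite_has_minimal2[of ?A ?V] by auto
  then have T: "T \<subseteq> ?V" "z \<in> T" "b \<in> T" "connected_on H T" by auto
  have minimal: "T' = T" if "T' \<subseteq> T" "z \<in> T'" "b \<in> T'" "connected_on H T'" for T'
    using min that T(1) by (metis (no_types, lifting) mem_Collect_eq order_trans)
  have zp: "{z, p} \<in> edges H" using complete_block_edge[OF B cB z(1) p z(2)] .
  have bp: "{b, p} \<in> edges H" using pb by (simp add: insert_commute)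
  have S: "connected_on H (insert p T)"
    using T zp by (intro connected_on_insert) (auto simp: connected_on_def)
  have S_minus: "connected_on H (insert p T - {c})" for c
  proof (cases "c \<in> T")
    case True
    have "connected_on H (insert p (T - {c}))"
    proof (rule connected_on_insert)
      fix u assume "u \<in> T - {c}"
      then show "\<exists>t\<in>T - {c}. (u, t) \<in> (adj (induced H (T - {c})))\<^sup>* \<and> {t, p} \<in> edges H"
        using minimal_connected_on_reaches_terminal[OF T(4,2,3) minimal True] zp bp
          adj_induced_rtrancl_closed[of u _ H "T - {c}"] by blast
    qed
    moreover have "insert p T - {c} = insert p (T - {c})" using T(1) True by blast
    ultimately show ?thesis by simp
  next
    case False
    then have "insert p T - {c} = insert p T \<or> insert p T - {c} = T" using T(1) by auto
    then show ?thesis using S T(4) by (elim disjE) simp_all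
  qed
  have "insert p T \<subseteq> verts H" using T(1) pV by blast
  then obtain B' where B': "is_block H B'" "insert p T \<subseteq> verts B'"
    using block_containing[OF wf _ _ S S_minus] by blast
  have "B' = B"
    using complete_blocks_eq[OF wf B'(1) block_graph_complete[OF bg B'(1)] B cB z(2)] B'(2) p z(1) T(2)
    by blast
  then show ?thesis using B' T(3) by auto
qed

lemma block_common_nbr_in_block:
  assumes wf: "wf_graph H" and bg: "block_graph H" and Q: "is_block H Q"
    and "u \<in> verts Q" and "w \<in> verts Q" and "u \<noteq> w"
    and ut: "{u, t} \<in> edges H" and wt: "{w, t} \<in> edges H"
  shows "t \<in> verts Q"
proof -
  have cQ: "complete Q" using block_graph_complete[OF bg Q] .
  have uw: "{u, w} \<in> edges H" using complete_block_edge[OF Q cQ] assms(4-6) .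
  have "{u, w, t} \<subseteq> verts H"
    using Q assms(4,5) ut wf by (auto simp: is_block_def subgraph_def wf_graph_def)
  moreover have "{a, b} \<in> edges H" if "a \<in> {u, w, t}" "b \<in> {u, w, t}" "a \<noteq> b" for a b
    using that uw ut wt by (auto simp: insert_commute)
  ultimately obtain B where B: "is_block H B" "{u, w, t} \<subseteq> verts B"
    using block_containing_clique[OF wf] by (metis insert_not_empty)
  have "B = Q"
    using complete_blocks_eq[OF wf B(1) block_graph_complete[OF bg B(1)] Q cQ \<open>u \<noteq> w\<close>] B(2) assms(4,5)
    by blast
  then show ?thesis using B(2) by auto
qed

lemma near_leaf_block_nbr_leaf:
  assumes wf: "wf_graph H" and bg: "block_graph H" and nl: "near_leaf_block H Q"
    and "v \<in> verts Q" and anchor: "(\<exists>c. is_anchor H Q c) \<longrightarrow> is_anchor H Q v"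
    and nbr: "block_nbr H Q B" and "x \<in> verts Q" "x \<in> verts B" and "x \<noteq> v" and "cut_vertex H x"
  shows "leaf_block H B"
proof -
  have Q: "is_block H Q" and B: "is_block H B" and "B \<noteq> Q"
    using nl nbr by (auto simp: near_leaf_block_def internal_block_def block_nbr_def)
  have "\<not> internal_block H B"
  proof
    assume internal: "internal_block H B"
    then have "\<not> leaf_block H B" by (simp add: leaf_block_def internal_block_def)
    then have "v \<in> verts B"
      using nl anchor nbr internal unfolding near_leaf_block_def is_anchor_def by blast
    then have "B = Q"
      using complete_blocks_eq[OF wf B block_graph_complete[OF bg B] Q block_graph_complete[OF bg Q] \<open>x \<noteq> v\<close>]
        assms(4,7,8) by blast
    then show False using \<open>B \<noteq> Q\<close> by simp
  qed
  moreover have "finite {c \<in> verts B. cut_vertex H c}"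
    using B by (auto simp: is_block_def subgraph_def wf_graph_def)
  then have "card {c \<in> verts B. cut_vertex H c} > 0"
    using assms(8,10) by (auto simp: card_gt_0_iff)
  ultimately show ?thesis using B by (simp add: leaf_block_def internal_block_def)
qed

text \<open>The block through \<open>x\<close> and \<open>p\<close> is a leaf block, hence the edge \<open>xp\<close>; so \<open>p\<close> is not a
  cut-vertex and all its neighbours lie in that block.\<close>

lemma near_leaf_block_outer_nbr_pendant:
  assumes wf: "wf_graph H" and cH: "connected_graph H" and pt: "pointed H" and bg: "block_graph H"
    and nl: "near_leaf_block H Q" and "v \<in> verts Q" and anchor: "(\<exists>c. is_anchor H Q c) \<longrightarrow> is_anchor H Q v"
    and x: "x \<in> verts Q" "x \<noteq> v" "cut_vertex H x"
    and xp: "{x, p} \<in> edges H" and "p \<notin> verts Q" and pb: "{p, b} \<in> edges H"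
  shows "b = x"
proof -
  have Q: "is_block H Q" using nl by (simp add: near_leaf_block_def internal_block_def)
  have "x \<noteq> p" and "{x, p} \<subseteq> verts H" using xp wf by (auto simp: wf_graph_def)
  moreover have "{c, d} \<in> edges H" if "c \<in> {x, p}" "d \<in> {x, p}" "c \<noteq> d" for c d
    using that xp by (auto simp: insert_commute)
  ultimately obtain B where B: "is_block H B" "{x, p} \<subseteq> verts B"
    using block_containing_clique[OF wf, of "{x, p}"] by blast
  then have "block_nbr H Q B" using Q x(1) \<open>p \<notin> verts Q\<close> by (auto simp: block_nbr_def)
  then have leaf: "leaf_block H B"
    using near_leaf_block_nbr_leaf[OF wf bg nl \<open>v \<in> verts Q\<close> anchor] x B(2) by blast
  then have "card (verts B) = 2" using pt unfolding pointed_def edge_block_def by blast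
  moreover have "finite (verts B)" using B(1) by (simp add: is_block_def subgraph_def wf_graph_def)
  ultimately have VB: "verts B = {x, p}"
    using card_subset_eq[OF _ B(2)] \<open>x \<noteq> p\<close> by simp
  have "\<not> cut_vertex H p"
  proof
    assume "cut_vertex H p"
    then have "{x, p} \<subseteq> {c \<in> verts B. cut_vertex H c}" using x(3) VB by auto
    then show False
      using leaf \<open>x \<noteq> p\<close> \<open>finite (verts B)\<close> card_mono[of "{c \<in> verts B. cut_vertex H c}" "{x, p}"]
      by (simp add: leaf_block_def)
  qed
  then have "b \<in> verts B"
    using non_cut_vertex_nbr_in_block[OF wf cH bg B(1), of p x] VB \<open>x \<noteq> p\<close> pb by auto
  then show ?thesis using VB pb wf by (auto simp: wf_graph_def)
qed

section \<open>Co-interval graphs and big ants\<close>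

lemma co_interval_modelE:
  assumes "wf_graph K" and "co_interval K"
  obtains l r :: "'a \<Rightarrow> real" where
    "\<And>u. u \<in> verts K \<Longrightarrow> l u \<le> r u"
    "\<And>u w. {u, w} \<in> edges K \<Longrightarrow> r u < l w \<or> r w < l u"
    "\<And>u w. u \<in> verts K \<Longrightarrow> w \<in> verts K \<Longrightarrow> {u, w} \<notin> edges K \<Longrightarrow> l u \<le> r w \<and> l w \<le> r u"
proof -
  obtain f :: "'a \<Rightarrow> real \<times> real" where
    f1: "\<And>v. v \<in> verts K \<Longrightarrow> fst (f v) \<le> snd (f v)" and
    f2: "\<And>u w. u \<in> verts K \<Longrightarrow> w \<in> verts K \<Longrightarrow> u \<noteq> w \<Longrightarrow>
        {u, w} \<in> edges K \<longleftrightarrow> snd (f u) < fst (f w) \<or> snd (f w) < fst (f u)"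
    using assms(2) unfolding co_interval_def by blast
  show thesis
  proof (rule that[of "fst \<circ> f" "snd \<circ> f"])
    fix u w
    show "u \<in> verts K \<Longrightarrow> (fst \<circ> f) u \<le> (snd \<circ> f) u" using f1 by simp
    assume "{u, w} \<in> edges K"
    moreover from this have "u \<in> verts K" "w \<in> verts K" "u \<noteq> w"
      using assms(1) by (auto simp: wf_graph_def)
    ultimately show "(snd \<circ> f) u < (fst \<circ> f) w \<or> (snd \<circ> f) w < (fst \<circ> f) u" using f2 by simp
  next
    fix u w assume "u \<in> verts K" "w \<in> verts K" "{u, w} \<notin> edges K"
    then show "(fst \<circ> f) u \<le> (snd \<circ> f) w \<and> (fst \<circ> f) w \<le> (snd \<circ> f) u"
      using f1 f2 by (cases "u = w") force+
  qed
qed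

lemma co_interval_no_induced_2K2:
  assumes "wf_graph K" and "co_interval K"
    and e: "{u1, u2} \<in> edges K" "{w1, w2} \<in> edges K"
    and n: "{u1, w1} \<notin> edges K" "{u1, w2} \<notin> edges K" "{u2, w1} \<notin> edges K" "{u2, w2} \<notin> edges K"
  shows False
proof -
  obtain l r :: "'a \<Rightarrow> real" where
    E: "\<And>u w. {u, w} \<in> edges K \<Longrightarrow> r u < l w \<or> r w < l u" and
    N: "\<And>u w. u \<in> verts K \<Longrightarrow> w \<in> verts K \<Longrightarrow> {u, w} \<notin> edges K \<Longrightarrow> l u \<le> r w \<and> l w \<le> r u"
    using co_interval_modelE[OF assms(1,2)] by metis
  have V: "u1 \<in> verts K" "u2 \<in> verts K" "w1 \<in> verts K" "w2 \<in> verts K"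
    using assms(1) e by (auto simp: wf_graph_def)
  show False
    using E[OF e(1)] E[OF e(2)] N[OF V(1,3) n(1)] N[OF V(1,4) n(2)] N[OF V(2,3) n(3)] N[OF V(2,4) n(4)]
    by linarith
qed

lemma co_interval_no_induced_net:
  assumes "wf_graph K" and "co_interval K"
    and t: "{t1, t2} \<in> edges K" "{t1, t3} \<in> edges K" "{t2, t3} \<in> edges K"
    and s: "{t1, s1} \<in> edges K" "{t2, s2} \<in> edges K" "{t3, s3} \<in> edges K"
    and n: "{s1, t2} \<notin> edges K" "{s1, t3} \<notin> edges K" "{s2, t1} \<notin> edges K"
      "{s2, t3} \<notin> edges K" "{s3, t1} \<notin> edges K" "{s3, t2} \<notin> edges K"
  shows False
proof -
  obtain l r :: "'a \<Rightarrow> real" where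
    L: "\<And>u. u \<in> verts K \<Longrightarrow> l u \<le> r u" and
    E: "\<And>u w. {u, w} \<in> edges K \<Longrightarrow> r u < l w \<or> r w < l u" and
    N: "\<And>u w. u \<in> verts K \<Longrightarrow> w \<in> verts K \<Longrightarrow> {u, w} \<notin> edges K \<Longrightarrow> l u \<le> r w \<and> l w \<le> r u"
    using co_interval_modelE[OF assms(1,2)] by metis
  have V: "t1 \<in> verts K" "t2 \<in> verts K" "t3 \<in> verts K" "s1 \<in> verts K" "s2 \<in> verts K" "s3 \<in> verts K"
    using assms(1) t s by (auto simp: wf_graph_def)
  show False
    using L[OF V(1)] L[OF V(2)] L[OF V(3)] E[OF t(1)] E[OF t(2)] E[OF t(3)] E[OF s(1)] E[OF s(2)] E[OF s(3)]
      N[OF V(4,2) n(1)] N[OF V(4,3) n(2)] N[OF V(5,1) n(3)] N[OF V(5,3) n(4)] N[OF V(6,1) n(5)] N[OF V(6,2) n(6)]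
    by linarith
qed

lemma co_interval_no_induced_C5:
  assumes "wf_graph K" and "co_interval K"
    and e: "{v1, v2} \<in> edges K" "{v2, v3} \<in> edges K" "{v3, v4} \<in> edges K" "{v4, v5} \<in> edges K"
      "{v5, v1} \<in> edges K"
    and n: "{v1, v3} \<notin> edges K" "{v1, v4} \<notin> edges K" "{v2, v4} \<notin> edges K" "{v2, v5} \<notin> edges K"
      "{v3, v5} \<notin> edges K"
  shows False
proof -
  obtain l r :: "'a \<Rightarrow> real" where
    L: "\<And>u. u \<in> verts K \<Longrightarrow> l u \<le> r u" and
    E: "\<And>u w. {u, w} \<in> edges K \<Longrightarrow> r u < l w \<or> r w < l u" and
    N: "\<And>u w. u \<in> verts K \<Longrightarrow> w \<in> verts K \<Longrightarrow> {u, w} \<notin> edges K \<Longrightarrow> l u \<le> r w \<and> l w \<le> r u"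
    using co_interval_modelE[OF assms(1,2)] by metis
  have V: "v1 \<in> verts K" "v2 \<in> verts K" "v3 \<in> verts K" "v4 \<in> verts K" "v5 \<in> verts K"
    using assms(1) e by (auto simp: wf_graph_def)
  show False
    using L[OF V(1)] L[OF V(2)] L[OF V(3)] L[OF V(4)] L[OF V(5)]
      E[OF e(1)] E[OF e(2)] E[OF e(3)] E[OF e(4)] E[OF e(5)]
      N[OF V(1,3) n(1)] N[OF V(1,4) n(2)] N[OF V(2,4) n(3)] N[OF V(2,5) n(4)] N[OF V(3,5) n(5)]
    by linarith
qed

lemma big_ant_edge_iff:
  assumes "complete Q" and "u \<noteq> w"
  shows "{u, w} \<in> edges (big_ant H Q x y) \<longleftrightarrow>
    (u \<in> verts Q \<and> w \<in> verts Q) \<or> ({u, w} \<in> edges H \<and> (u = x \<or> w = x \<or> u = y \<or> w = y))"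
  using assms by (auto simp: big_ant_def complete_def delta_def)

lemma subgraph_big_ant:
  assumes wf: "wf_graph H" and Q: "subgraph Q H" and "x \<in> verts Q" and "y \<in> verts Q"
  shows "subgraph (big_ant H Q x y) H"
proof -
  let ?A = "big_ant H Q x y"
  have nbhd: "nbhd H z \<subseteq> verts H" for z
    using wf by (auto simp: nbhd_def wf_graph_def)
  have V: "verts ?A \<subseteq> verts H"
    using Q nbhd by (auto simp: big_ant_def subgraph_def)
  have E: "edges ?A \<subseteq> edges H"
    using Q by (auto simp: big_ant_def delta_def subgraph_def)
  have "e \<subseteq> verts ?A" if e: "e \<in> edges ?A" for e
  proof (cases "e \<in> edges Q")
    case True then show ?thesis using Q by (auto simp: big_ant_def subgraph_def wf_graph_def)
  next
    case False
    then obtain z where z: "z \<in> {x, y}" "e \<in> edges H" "z \<in> e"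
      using e by (auto simp: big_ant_def delta_def)
    moreover obtain a b where "e = {a, b}"
      using wf z(2) by (auto simp: wf_graph_def card_2_iff)
    ultimately have "e = {z, if z = a then b else a}" by auto
    then show ?thesis using z \<open>x \<in> verts Q\<close> \<open>y \<in> verts Q\<close> by (auto simp: big_ant_def nbhd_def)
  qed
  moreover have "finite (verts ?A)" using V wf finite_subset by (auto simp: wf_graph_def)
  ultimately show ?thesis
    using V E wf by (auto simp: subgraph_def wf_graph_def)
qed

text \<open>The interval model: \<open>x\<close>, the other vertices of \<open>Q\<close> and \<open>y\<close> are the points
  \<open>0 < 1 < \<dots> < N + 1\<close>; the outer neighbours of \<open>x\<close> get \<open>[1/2, N + 2]\<close>, missing only
  the point of \<open>x\<close>, and the remaining outer neighbours of \<open>y\<close> get \<open>[-1, N + 1/2]\<close>,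
  missing only the point of \<open>y\<close>.\<close>

lemma co_interval_big_ant:
  assumes wf: "wf_graph H" and fQ: "finite (verts Q)" and cQ: "complete Q"
    and xQ: "x \<in> verts Q" and yQ: "y \<in> verts Q"
    and common: "\<And>w. y \<noteq> x \<Longrightarrow> {x, w} \<in> edges H \<Longrightarrow> {y, w} \<in> edges H \<Longrightarrow> w \<in> verts Q"
  shows "co_interval (big_ant H Q x y)"
proof -
  define W where "W = verts Q - {x, y}"
  obtain g N where gW: "g ` W = {i::nat. i < N}" and ginj: "inj_on g W"
    using finite_imp_inj_to_nat_seg[of W] fQ by (auto simp: W_def)
  define f :: "'a \<Rightarrow> real \<times> real" where "f u = (if u = x then (0, 0) else if u = y then (real N + 1, real N + 1)
     else if u \<in> verts Q then (real (g u) + 1, real (g u) + 1)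
     else if {x, u} \<in> edges H then (1/2, real N + 2) else (-1, real N + 1/2))" for u
  have ne: "a \<noteq> b" if "{a, b} \<in> edges H" for a b
    using wf that by (auto simp: wf_graph_def)
  have fx: "f x = (0, 0)" by (simp add: f_def)
  have fy: "y \<noteq> x \<Longrightarrow> f y = (real N + 1, real N + 1)" by (simp add: f_def)
  have fW: "u \<in> W \<Longrightarrow> f u = (real (g u) + 1, real (g u) + 1)" for u by (simp add: f_def W_def)
  have fA: "u \<notin> verts Q \<Longrightarrow> {x, u} \<in> edges H \<Longrightarrow> f u = (1/2, real N + 2)" for u
    using xQ yQ by (auto simp: f_def)
  have fB: "u \<notin> verts Q \<Longrightarrow> {x, u} \<notin> edges H \<Longrightarrow> f u = (-1, real N + 1/2)" for u
    using xQ yQ by (auto simp: f_def)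
  have gN: "real (g u) + 1 \<le> real N" if "u \<in> W" for u
    using gW that by (metis imageI mem_Collect_eq Suc_leI of_nat_Suc of_nat_le_iff add.commute)
  have gi: "real (g u) < real (g w) \<or> real (g w) < real (g u)" if "u \<in> W" "w \<in> W" "u \<noteq> w" for u w
    using ginj that by (metis inj_onD linorder_neqE_linordered_idom of_nat_eq_iff)
  have cases: "u = x \<or> (u = y \<and> y \<noteq> x) \<or> u \<in> W \<or> (u \<notin> verts Q \<and> {x, u} \<in> edges H)
     \<or> (u \<notin> verts Q \<and> {x, u} \<notin> edges H \<and> {y, u} \<in> edges H \<and> y \<noteq> x)"
    if "u \<in> verts (big_ant H Q x y)" for u
    using that by (auto simp: big_ant_def nbhd_def W_def)
  have WQ: "u \<in> W \<Longrightarrow> u \<in> verts Q \<and> u \<noteq> x \<and> u \<noteq> y" for u by (simp add: W_def)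
  have not_common: "{u, x} \<in> edges H \<Longrightarrow> u \<notin> verts Q \<Longrightarrow> y \<noteq> x \<Longrightarrow> {u, y} \<in> edges H \<Longrightarrow> False" for u
    using common by (metis insert_commute)
  show ?thesis
    unfolding co_interval_def
  proof (intro exI[of _ f] conjI ballI impI)
    fix v show "fst (f v) \<le> snd (f v)" by (simp add: f_def)
  next
    fix u w assume u: "u \<in> verts (big_ant H Q x y)" and w: "w \<in> verts (big_ant H Q x y)" and "u \<noteq> w"
    show "{u, w} \<in> edges (big_ant H Q x y) \<longleftrightarrow> snd (f u) < fst (f w) \<or> snd (f w) < fst (f u)"
      unfolding big_ant_edge_iff[OF cQ \<open>u \<noteq> w\<close>]
      using cases[OF u] cases[OF w] \<open>u \<noteq> w\<close> xQ yQ
      by (elim disjE) (auto simp: fx fy fW fA fB insert_commute dest: WQ gN gi ne not_common)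
  qed
qed

section \<open>Maximal co-interval subgraphs near a near-leaf block\<close>

lemma leaf_block_nbr_pendant_edge:
  assumes wf: "wf_graph H" and pt: "pointed H" and bg: "block_graph H"
    and L: "leaf_block H L" and nbr: "block_nbr H Q L" and "x \<in> verts Q" and "x \<in> verts L"
  obtains a where "a \<notin> verts Q" and "{x, a} \<in> edges L"
proof -
  have BL: "is_block H L" and BQ: "is_block H Q" and "Q \<noteq> L"
    using nbr by (auto simp: block_nbr_def)
  have "card (verts L) = 2" using pt L unfolding pointed_def edge_block_def by blast
  then obtain a where VL: "verts L = {x, a}" and "a \<noteq> x"
    using \<open>x \<in> verts L\<close> by (auto simp: card_2_iff doubleton_eq_iff)
  have "a \<notin> verts Q"
  proof
    assume "a \<in> verts Q"
    then have "L = Q"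
      using complete_blocks_eq[OF wf BL block_graph_complete[OF bg BL] BQ block_graph_complete[OF bg BQ] \<open>a \<noteq> x\<close>]
        VL \<open>x \<in> verts Q\<close> by blast
    then show False using \<open>Q \<noteq> L\<close> by simp
  qed
  moreover have "{x, a} \<in> edges L"
    using block_graph_complete[OF bg BL] VL \<open>a \<noteq> x\<close> by (auto simp: complete_def card_2_iff)
  ultimately show thesis by (rule that)
qed

locale co_interval_with_pendant_edge =
  fixes H K Q :: "'a graph" and x a :: 'a
  assumes wf: "wf_graph H"
    and subgraph: "subgraph K H" and co_interval: "co_interval K"
    and complete: "complete Q" and x: "x \<in> verts Q"
    and a: "a \<notin> verts Q" "{x, a} \<in> edges K"
    and outer_nbr_pendant: "\<And>p b. {x, p} \<in> edges H \<Longrightarrow> p \<notin> verts Q \<Longrightarrow> {p, b} \<in> edges H \<Longrightarrow> b = x"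
    and common_nbr_in: "\<And>u w t. u \<in> verts Q \<Longrightarrow> w \<in> verts Q \<Longrightarrow> u \<noteq> w \<Longrightarrow>
      {u, t} \<in> edges H \<Longrightarrow> {w, t} \<in> edges H \<Longrightarrow> t \<in> verts Q"
begin

lemma wf_K: "wf_graph K"
  using subgraph by (simp add: subgraph_def)

lemma edge_K: "e \<in> edges K \<Longrightarrow> e \<in> edges H"
  using subgraph by (auto simp: subgraph_def)

lemma nbr_of_a: "{a, b} \<in> edges K \<Longrightarrow> b = x"
  using outer_nbr_pendant[OF edge_K[OF a(2)] a(1)] edge_K by blast

lemma edge_K_distinct: "{p, q} \<in> edges K \<Longrightarrow> p \<noteq> q"
  using wf_K by (auto simp: wf_graph_def)

text \<open>The edge \<open>xa\<close> and an edge \<open>pq\<close> avoiding \<open>x\<close> must not form an induced \<open>2K\<^sub>2\<close>.\<close>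

lemma edge_avoiding_x:
  assumes pq: "{p, q} \<in> edges K" and "x \<noteq> p" and "x \<noteq> q"
  shows "(p \<in> verts Q \<and> {x, p} \<in> edges K) \<or> (q \<in> verts Q \<and> {x, q} \<in> edges K)"
proof -
  have "{x, p} \<in> edges K \<or> {x, q} \<in> edges K"
    using co_interval_no_induced_2K2[OF wf_K co_interval a(2) pq] nbr_of_a \<open>x \<noteq> p\<close> \<open>x \<noteq> q\<close> by metis
  moreover have "p \<in> verts Q" if "{x, p} \<in> edges K"
    using outer_nbr_pendant[OF edge_K[OF that] _ edge_K[OF pq]] \<open>x \<noteq> q\<close> by auto
  moreover have "{q, p} \<in> edges H" using edge_K[OF pq] by (simp add: insert_commute)
  then have "q \<in> verts Q" if "{x, q} \<in> edges K"
    using outer_nbr_pendant[OF edge_K[OF that]] \<open>x \<noteq> p\<close> by auto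
  ultimately show ?thesis by blast
qed

text \<open>If \<open>y\<^sub>1 \<noteq> y\<^sub>2\<close>, then \<open>x y\<^sub>1 y\<^sub>2\<close> with pendants \<open>a q\<^sub>1 q\<^sub>2\<close> would induce a net (if \<open>y\<^sub>1y\<^sub>2 \<in> K\<close>),
  \<open>x y\<^sub>1 q\<^sub>1 q\<^sub>2 y\<^sub>2\<close> a \<open>C\<^sub>5\<close> (if \<open>q\<^sub>1q\<^sub>2 \<in> K\<close>), and otherwise \<open>y\<^sub>1q\<^sub>1, y\<^sub>2q\<^sub>2\<close> a \<open>2K\<^sub>2\<close>.\<close>

lemma outer_attached_unique:
  assumes y1: "y1 \<in> verts Q" "y1 \<noteq> x" "{x, y1} \<in> edges K" and q1: "q1 \<notin> verts Q" "{y1, q1} \<in> edges K"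
    and y2: "y2 \<in> verts Q" "y2 \<noteq> x" "{x, y2} \<in> edges K" and q2: "q2 \<notin> verts Q" "{y2, q2} \<in> edges K"
  shows "y1 = y2"
proof (rule ccontr)
  assume "y1 \<noteq> y2"
  have no_edge_to_outside: "{u, q} \<notin> edges K"
    if "u \<in> verts Q" "q \<notin> verts Q" "w \<in> verts Q" "u \<noteq> w" "{w, q} \<in> edges K" for u q w
    using common_nbr_in[OF that(1,3,4) _ edge_K[OF that(5)]] that(2) edge_K by blast
  have n: "{x, q1} \<notin> edges K" "{x, q2} \<notin> edges K" "{y1, q2} \<notin> edges K" "{q1, y2} \<notin> edges K"
    using no_edge_to_outside[OF x q1(1) y1(1) y1(2)[symmetric] q1(2)]
      no_edge_to_outside[OF x q2(1) y2(1) y2(2)[symmetric] q2(2)]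
      no_edge_to_outside[OF y1(1) q2(1) y2(1) \<open>y1 \<noteq> y2\<close> q2(2)]
      no_edge_to_outside[OF y2(1) q1(1) y1(1) \<open>y1 \<noteq> y2\<close>[symmetric] q1(2)]
    by (auto simp: insert_commute)
  have "{a, y1} \<notin> edges K" "{a, y2} \<notin> edges K" using nbr_of_a y1(2) y2(2) by blast+
  then have no_net: "{y1, y2} \<notin> edges K"
    using co_interval_no_induced_net[OF wf_K co_interval y1(3) y2(3) _ a(2) q1(2) q2(2)] n
    by (auto simp: insert_commute)
  show False
  proof (cases "{q1, q2} \<in> edges K")
    case True
    moreover have "{q2, y2} \<in> edges K" "{y2, x} \<in> edges K"
      using q2(2) y2(3) by (simp_all add: insert_commute)
    ultimately show False
      using co_interval_no_induced_C5[OF wf_K co_interval y1(3) q1(2)] n no_net by blast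
  next
    case False
    then show False
      using co_interval_no_induced_2K2[OF wf_K co_interval q1(2) q2(2)] n no_net by (auto simp: insert_commute)
  qed
qed

lemma edges_subset_big_antI:
  assumes "\<And>p q. p \<in> verts Q \<Longrightarrow> p \<noteq> x \<Longrightarrow> {x, p} \<in> edges K \<Longrightarrow> q \<notin> verts Q \<Longrightarrow> {p, q} \<in> edges K \<Longrightarrow> p = y"
  shows "edges K \<subseteq> edges (big_ant H Q x y)"
proof
  fix e assume e: "e \<in> edges K"
  then obtain p q where epq: "e = {p, q}" using wf_K by (auto simp: wf_graph_def card_2_iff)
  have attached: "{p, q} \<in> edges (big_ant H Q x y)"
    if "p \<in> verts Q" "p \<noteq> x" "{x, p} \<in> edges K" "{p, q} \<in> edges K" for p q
  proof (cases "q \<in> verts Q")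
    case True
    then show ?thesis using that complete edge_K_distinct by (auto simp: big_ant_def complete_def)
  next
    case False
    then have "p = y" using assms that by blast
    then show ?thesis using edge_K[OF that(4)] by (simp add: big_ant_def delta_def)
  qed
  show "e \<in> edges (big_ant H Q x y)"
  proof (cases "x \<in> e")
    case True then show ?thesis using edge_K[OF e] by (simp add: big_ant_def delta_def)
  next
    case False
    then show ?thesis
      using edge_avoiding_x[OF e[unfolded epq]] attached[of p q] attached[of q p] e epq
      by (auto simp: insert_commute)
  qed
qed

lemma edges_subset_big_ant: "\<exists>y\<in>verts Q. edges K \<subseteq> edges (big_ant H Q x y)"
proof (cases "\<exists>y q. y \<in> verts Q \<and> y \<noteq> x \<and> {x, y} \<in> edges K \<and> q \<notin> verts Q \<and> {y, q} \<in> edges K")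
  case True
  then obtain y q where "y \<in> verts Q" "y \<noteq> x" "{x, y} \<in> edges K" "q \<notin> verts Q" "{y, q} \<in> edges K"
    by blast
  then show ?thesis using outer_attached_unique by (metis edges_subset_big_antI)
next
  case False
  then show ?thesis using x edges_subset_big_antI[of x] by blast
qed

end

theorem mainTheorem9:
  fixes H Q L K :: "'a graph" and v x :: 'a
  assumes "wf_graph H" and "connected_graph H" and "pointed H" and "block_graph H"
    and "near_leaf_block H Q"
    and "v \<in> verts Q" and "cut_vertex H v"
    and "(\<exists>c. is_anchor H Q c) \<longrightarrow> is_anchor H Q v"
    and "x \<in> verts Q" and "cut_vertex H x" and "x \<noteq> v"
    and "leaf_block H L" and "block_nbr H Q L" and "x \<in> verts L"
    and "max_co_interval_subgraph H K" and "edges L \<subseteq> edges K"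
  shows "\<exists>y\<in>verts Q. edges K = edges (big_ant H Q x y)"
proof -
  have Q: "is_block H Q" using assms(5) by (simp add: near_leaf_block_def internal_block_def)
  have cQ: "complete Q" using block_graph_complete[OF assms(4) Q] .
  have QH: "subgraph Q H" using Q by (simp add: is_block_def)
  obtain a where "a \<notin> verts Q" and "{x, a} \<in> edges L"
    using leaf_block_nbr_pendant_edge[OF assms(1,3,4,12,13,9,14)] .
  interpret co_interval_with_pendant_edge H K Q x a
  proof
    show "subgraph K H" "co_interval K"
      using assms(15) by (simp_all add: max_co_interval_subgraph_def)
    show "{x, a} \<in> edges K" using \<open>{x, a} \<in> edges L\<close> assms(16) by blast
    show "b = x" if "{x, p} \<in> edges H" "p \<notin> verts Q" "{p, b} \<in> edges H" for p b
      using near_leaf_block_outer_nbr_pendant[OF assms(1-6,8-9,11,10) that] .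
    show "t \<in> verts Q" if "u \<in> verts Q" "w \<in> verts Q" "u \<noteq> w" "{u, t} \<in> edges H" "{w, t} \<in> edges H"
      for u w t
      using block_common_nbr_in_block[OF assms(1,4) Q that] .
  qed (use assms(1,9) cQ \<open>a \<notin> verts Q\<close> in auto)
  obtain y where y: "y \<in> verts Q" "edges K \<subseteq> edges (big_ant H Q x y)"
    using edges_subset_big_ant by blast
  have "finite (verts Q)" using QH by (simp add: subgraph_def wf_graph_def)
  then have "co_interval (big_ant H Q x y)"
    using co_interval_big_ant[OF wf _ cQ x y(1)] common_nbr_in[OF x y(1)] by metis
  moreover have "subgraph (big_ant H Q x y) H" using subgraph_big_ant[OF wf QH x y(1)] .
  ultimately have "edges K = edges (big_ant H Q x y)"
    using assms(15) y(2) unfolding max_co_interval_subgraph_def by blast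
  then show ?thesis using y(1) by blast
qed

end
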